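(* Let $A$ be an invertible integral $g\times g$ matrix such that \[A^t=\begin{pmatrix}\mathrm{Id}_{g-k} & Y\\ 0 & Z\end{pmatrix}\] where $Z$ is an integral $k\times k$ matrix with $Z-\mathrm{Id}$ injective and $Y$ is an integral $(g-k)\times k$ matrix. Then there is an integral $g\times g$ matrix $B$ such that \[\operatorname{im}(A-\mathrm{Id})+B\big(\ker((A^t)^{-1}-\mathrm{Id})\big)=\mathbb{Q}^g\] and $B^t(A^t)^{-1}=A^{-1}B$.
   Context: Here $A$, $B$ act on $\mathbb{Q}^g$ (column vectors); $\operatorname{im}$ and $\ker$ are taken over $\mathbb{Q}$. In the application, $\mathbb{Q}^g$ is the Lagrangian $L=\ker(H_1(\partial V_g;\mathbb{Q})\to H_1(V_g;\mathbb{Q}))$ with basis given by meridian classes. *)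

theory Defs
  imports "Jordan_Normal_Form.Matrix_Kernel"
begin

definition ratm :: "int mat \<Rightarrow> rat mat" where
  "ratm M = map_mat rat_of_int M"

definition qinv :: "rat mat \<Rightarrow> rat mat" where
  "qinv M = (THE N. N \<in> carrier_mat (dim_row M) (dim_row M) \<and>
                    M * N = 1\<^sub>m (dim_row M) \<and> N * M = 1\<^sub>m (dim_row M))"

definition mat_image :: "rat mat \<Rightarrow> rat vec set" where
  "mat_image M = (\<lambda>v. M *\<^sub>v v) ` carrier_vec (dim_col M)"

end

theory Submission
  imports Defs
begin

text \<open>Take \<open>B = A\<close>, so that \<open>B\<^sup>T (A\<^sup>T)\<^sup>-\<^sup>1 = Id = A\<^sup>-\<^sup>1 B\<close>. Split
  \<open>\<rat>\<^sup>g = \<rat>\<^sup>g\<^sup>-\<^sup>k \<oplus> \<rat>\<^sup>k\<close>. The block form of \<open>A\<^sup>T\<close> shows that it fixes every \<open>(a, 0)\<close>,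
  so these vectors lie in \<open>ker((A\<^sup>T)\<^sup>-\<^sup>1 - Id)\<close>, and \<open>A (a, 0) = (a, Y\<^sup>T a)\<close>. Since
  \<open>Z - Id\<close> is injective, \<open>Z\<^sup>T - Id\<close> is surjective, and \<open>(A - Id)(0, c) = (0, (Z\<^sup>T - Id) c)\<close>;
  choosing \<open>(Z\<^sup>T - Id) c = b - Y\<^sup>T a\<close> gives \<open>(a, b) = (A - Id)(0, c) + A (a, 0)\<close>.\<close>

lemma mat_mult_zero_vec [simp]:
  "A \<in> carrier_mat n k \<Longrightarrow> A *\<^sub>v 0\<^sub>v k = (0\<^sub>v n :: 'a :: semiring_0 vec)"
  by (rule eq_vecI) auto

lemma zero_mat_mult_vec [simp]:
  "v \<in> carrier_vec n \<Longrightarrow> 0\<^sub>m k n *\<^sub>v v = (0\<^sub>v k :: 'a :: semiring_0 vec)"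
  by (rule eq_vecI) auto

lemma four_block_mat_mult_append_vec:
  fixes A :: "'a :: comm_semiring_0 mat"
  assumes A: "A \<in> carrier_mat n1 m1" and B: "B \<in> carrier_mat n1 m2"
    and C: "C \<in> carrier_mat n2 m1" and D: "D \<in> carrier_mat n2 m2"
    and v: "v \<in> carrier_vec m1" and w: "w \<in> carrier_vec m2"
  shows "four_block_mat A B C D *\<^sub>v (v @\<^sub>v w) = (A *\<^sub>v v + B *\<^sub>v w) @\<^sub>v (C *\<^sub>v v + D *\<^sub>v w)"
proof (rule eq_vecI)
  fix i assume "i < dim_vec ((A *\<^sub>v v + B *\<^sub>v w) @\<^sub>v (C *\<^sub>v v + D *\<^sub>v w))"
  hence i: "i < n1 + n2" using B D by simp
  show "(four_block_mat A B C D *\<^sub>v (v @\<^sub>v w)) $ i = ((A *\<^sub>v v + B *\<^sub>v w) @\<^sub>v (C *\<^sub>v v + D *\<^sub>v w)) $ i"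
    using i A B C D v w row_four_block_mat[OF A B C D]
    by (auto intro!: scalar_prod_append[of _ m1 _ m2])
qed (use A B C D in auto)

lemma mat_mult_vec_surj_of_det_nonzero:
  fixes M :: "'a :: field mat"
  assumes M: "M \<in> carrier_mat n n" and det: "det M \<noteq> 0" and b: "b \<in> carrier_vec n"
  obtains c where "c \<in> carrier_vec n" "M *\<^sub>v c = b"
proof -
  obtain N where N: "N \<in> carrier_mat n n" and MN: "M * N = 1\<^sub>m n"
    using det_non_zero_imp_unit[OF M det, of undefined] unfolding Units_def ring_mat_simps by auto
  have "M *\<^sub>v (N *\<^sub>v b) = b"
    using assoc_mult_mat_vec[OF M N b] MN b by simp
  then show thesis using that[of "N *\<^sub>v b"] N b by auto
qed

lemma transpose_mat_minus_one_surj_of_inj: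
  fixes Z :: "'a :: field mat"
  assumes Z: "Z \<in> carrier_mat k k"
    and inj: "\<forall>v \<in> carrier_vec k. (Z - 1\<^sub>m k) *\<^sub>v v = 0\<^sub>v k \<longrightarrow> v = 0\<^sub>v k"
    and b: "b \<in> carrier_vec k"
  obtains c where "c \<in> carrier_vec k" "(transpose_mat Z - 1\<^sub>m k) *\<^sub>v c = b"
proof -
  have Z1: "Z - 1\<^sub>m k \<in> carrier_mat k k" using Z by (simp add: minus_carrier_mat)
  have "det (Z - 1\<^sub>m k) \<noteq> 0"
    using det_0_iff_vec_prod_zero[OF Z1] inj by blast
  moreover have "transpose_mat Z - 1\<^sub>m k = transpose_mat (Z - 1\<^sub>m k)"
    using Z by (intro eq_matI) auto
  ultimately have "det (transpose_mat Z - 1\<^sub>m k) \<noteq> 0"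
    using det_transpose[OF Z1] by simp
  moreover have "transpose_mat Z - 1\<^sub>m k \<in> carrier_mat k k"
    using Z by (simp add: minus_carrier_mat)
  ultimately show thesis using mat_mult_vec_surj_of_det_nonzero b that by blast
qed

lemma block_unitriangular_image_plus_fixed_vectors:
  fixes M Y Z :: "'a :: field mat"
  assumes Y: "Y \<in> carrier_mat n k" and Z: "Z \<in> carrier_mat k k"
    and Mt: "transpose_mat M = four_block_mat (1\<^sub>m n) Y (0\<^sub>m k n) Z"
    and inj: "\<forall>v \<in> carrier_vec k. (Z - 1\<^sub>m k) *\<^sub>v v = 0\<^sub>v k \<longrightarrow> v = 0\<^sub>v k"
    and v: "v \<in> carrier_vec (n + k)"
  obtains u p where "u \<in> carrier_vec (n + k)" "p \<in> carrier_vec (n + k)"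
    "transpose_mat M *\<^sub>v p = p" "v = (M - 1\<^sub>m (n + k)) *\<^sub>v u + M *\<^sub>v p"
proof -
  have M: "M = four_block_mat (1\<^sub>m n) (0\<^sub>m n k) (transpose_mat Y) (transpose_mat Z)"
    using arg_cong[OF Mt, of transpose_mat]
    by (simp add: transpose_four_block_mat[OF one_carrier_mat Y zero_carrier_mat Z])
  have M1: "M - 1\<^sub>m (n + k) = four_block_mat (0\<^sub>m n n) (0\<^sub>m n k) (transpose_mat Y) (transpose_mat Z - 1\<^sub>m k)"
    unfolding M using Y Z by (intro eq_matI) auto
  define a where "a = vec_first v n"
  define b where "b = vec_last v k"
  have a: "a \<in> carrier_vec n" and b: "b \<in> carrier_vec k" and ab: "v = a @\<^sub>v b"
    using v by (auto simp: a_def b_def)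
  obtain c where c: "c \<in> carrier_vec k" and Zc: "(transpose_mat Z - 1\<^sub>m k) *\<^sub>v c = b - transpose_mat Y *\<^sub>v a"
    using transpose_mat_minus_one_surj_of_inj[OF Z inj, of "b - transpose_mat Y *\<^sub>v a"] Y a b by auto
  define u where "u = 0\<^sub>v n @\<^sub>v c"
  define p where "p = a @\<^sub>v 0\<^sub>v k"
  show thesis
  proof
    show "u \<in> carrier_vec (n + k)" "p \<in> carrier_vec (n + k)"
      using a c by (auto simp: u_def p_def)
    show "transpose_mat M *\<^sub>v p = p"
      unfolding Mt p_def using Y Z a
      by (subst four_block_mat_mult_append_vec[OF one_carrier_mat Y zero_carrier_mat Z a zero_carrier_vec]) auto
    have "(M - 1\<^sub>m (n + k)) *\<^sub>v u = 0\<^sub>v n @\<^sub>v (b - transpose_mat Y *\<^sub>v a)"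
      unfolding M1 u_def using Y Z c Zc
      by (subst four_block_mat_mult_append_vec[OF zero_carrier_mat zero_carrier_mat _ _ zero_carrier_vec c])
        (auto simp: minus_carrier_mat)
    moreover have "M *\<^sub>v p = a @\<^sub>v transpose_mat Y *\<^sub>v a"
      unfolding M p_def using Y Z a
      by (subst four_block_mat_mult_append_vec[OF one_carrier_mat zero_carrier_mat _ _ a zero_carrier_vec]) auto
    moreover have "(0\<^sub>v n @\<^sub>v (b - transpose_mat Y *\<^sub>v a)) + (a @\<^sub>v transpose_mat Y *\<^sub>v a) = a @\<^sub>v b"
      using a b Y by (subst append_vec_add[of _ n _ _ k]) auto
    ultimately show "v = (M - 1\<^sub>m (n + k)) *\<^sub>v u + M *\<^sub>v p"
      using ab by simp
  qed
qed

lemma fixed_vector_in_kernel_of_inverse_minus_one: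
  fixes M N :: "'a :: comm_ring_1 mat"
  assumes M: "M \<in> carrier_mat n n" and N: "N \<in> carrier_mat n n" and NM: "N * M = 1\<^sub>m n"
    and p: "p \<in> carrier_vec n" and fixed: "M *\<^sub>v p = p"
  shows "p \<in> mat_kernel (N - 1\<^sub>m n)"
proof (rule mat_kernelI)
  have "N *\<^sub>v p = N *\<^sub>v (M *\<^sub>v p)" using fixed by simp
  also have "\<dots> = p" using assoc_mult_mat_vec[OF N M p] NM p by simp
  finally show "(N - 1\<^sub>m n) *\<^sub>v p = 0\<^sub>v n"
    using minus_mult_distrib_mat_vec[OF N one_carrier_mat p] p by simp
qed (use N p in \<open>auto simp: minus_carrier_mat\<close>)

lemma qinv_eq:
  assumes M: "M \<in> carrier_mat n n" and N: "N \<in> carrier_mat n n" and MN: "M * N = 1\<^sub>m n"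
  shows "qinv M = N"
  unfolding qinv_def
proof (rule the_equality)
  show "N \<in> carrier_mat (dim_row M) (dim_row M) \<and> M * N = 1\<^sub>m (dim_row M) \<and> N * M = 1\<^sub>m (dim_row M)"
    using M N MN mat_mult_left_right_inverse[OF M N MN] by auto
next
  fix N' assume "N' \<in> carrier_mat (dim_row M) (dim_row M) \<and> M * N' = 1\<^sub>m (dim_row M) \<and> N' * M = 1\<^sub>m (dim_row M)"
  hence N': "N' \<in> carrier_mat n n" and N'M: "N' * M = 1\<^sub>m n" using M by auto
  have "N' = N' * (M * N)" using MN N' by simp
  also have "\<dots> = (N' * M) * N" using assoc_mult_mat[OF N' M N] by simp
  finally show "N' = N" using N'M N by simp
qed

lemma qinv_inverse:
  assumes M: "M \<in> carrier_mat n n" and N: "N \<in> carrier_mat n n" and MN: "M * N = 1\<^sub>m n"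
  shows "qinv M \<in> carrier_mat n n" "M * qinv M = 1\<^sub>m n" "qinv M * M = 1\<^sub>m n"
  using qinv_eq[OF assms] N MN mat_mult_left_right_inverse[OF assms] by auto

lemma ratm_carrier_mat [simp]: "ratm A \<in> carrier_mat n m \<longleftrightarrow> A \<in> carrier_mat n m"
  unfolding ratm_def carrier_mat_def by simp

lemma ratm_one [simp]: "ratm (1\<^sub>m n) = 1\<^sub>m n"
  unfolding ratm_def by (fact of_int_hom.mat_hom_one)

lemma ratm_zero [simp]: "ratm (0\<^sub>m n m) = 0\<^sub>m n m"
  unfolding ratm_def by (intro eq_matI) auto

lemma ratm_transpose: "ratm (transpose_mat A) = transpose_mat (ratm A)"
  unfolding ratm_def by (intro eq_matI) auto

lemma ratm_four_block_mat:
  assumes "A \<in> carrier_mat nr1 nc1" "B \<in> carrier_mat nr1 nc2"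
    "C \<in> carrier_mat nr2 nc1" "D \<in> carrier_mat nr2 nc2"
  shows "ratm (four_block_mat A B C D) = four_block_mat (ratm A) (ratm B) (ratm C) (ratm D)"
  unfolding ratm_def by (rule map_four_block_mat[OF assms])

lemma ratm_right_inverse:
  assumes A: "A \<in> carrier_mat n n" and inv: "invertible_mat A"
  obtains N where "N \<in> carrier_mat n n" "ratm A * N = 1\<^sub>m n"
proof -
  obtain B where AB: "A * B = 1\<^sub>m n" and BA: "B * A = 1\<^sub>m (dim_row B)"
    using inv A unfolding invertible_mat_def inverts_mat_def by auto
  have "dim_col B = n" using arg_cong[OF AB, of dim_col] by simp
  moreover have "dim_row B = n" using arg_cong[OF BA, of dim_col] A by simp
  ultimately have B: "B \<in> carrier_mat n n" by blast
  have "ratm A * ratm B = 1\<^sub>m n"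
    using of_int_hom.mat_hom_mult[OF A B, symmetric] ratm_one[of n] unfolding ratm_def AB by (rule trans)
  with B show thesis using that[of "ratm B"] by simp
qed

lemma image_plus_fixed_space_of_transpose:
  fixes Q Y Z :: "rat mat"
  assumes Q: "Q \<in> carrier_mat (n + k) (n + k)"
    and Qt_inv: "qinv (transpose_mat Q) * transpose_mat Q = 1\<^sub>m (n + k)"
    and Y: "Y \<in> carrier_mat n k" and Z: "Z \<in> carrier_mat k k"
    and Qt: "transpose_mat Q = four_block_mat (1\<^sub>m n) Y (0\<^sub>m k n) Z"
    and inj: "\<forall>v \<in> carrier_vec k. (Z - 1\<^sub>m k) *\<^sub>v v = 0\<^sub>v k \<longrightarrow> v = 0\<^sub>v k"
    and Qi: "qinv (transpose_mat Q) \<in> carrier_mat (n + k) (n + k)"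
  shows "{x + y | x y. x \<in> mat_image (Q - 1\<^sub>m (n + k)) \<and>
           y \<in> (\<lambda>v. Q *\<^sub>v v) ` mat_kernel (qinv (transpose_mat Q) - 1\<^sub>m (n + k))}
         = carrier_vec (n + k)" (is "?S = _")
proof
  show "?S \<subseteq> carrier_vec (n + k)"
  proof
    fix s assume "s \<in> ?S"
    then obtain x y where s: "s = x + y"
      and "y \<in> (\<lambda>v. Q *\<^sub>v v) ` mat_kernel (qinv (transpose_mat Q) - 1\<^sub>m (n + k))"
      by blast
    then obtain w where "y = Q *\<^sub>v w" by blast
    then have "dim_vec y = n + k" using Q by simp
    then show "s \<in> carrier_vec (n + k)" unfolding s by (intro carrier_vecI) simp
  qed
  show "carrier_vec (n + k) \<subseteq> ?S"
  proof
    fix v :: "rat vec" assume "v \<in> carrier_vec (n + k)"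
    then obtain u p where u: "u \<in> carrier_vec (n + k)" and p: "p \<in> carrier_vec (n + k)"
      and fixed: "transpose_mat Q *\<^sub>v p = p" and v: "v = (Q - 1\<^sub>m (n + k)) *\<^sub>v u + Q *\<^sub>v p"
      using block_unitriangular_image_plus_fixed_vectors[OF Y Z Qt inj] by blast
    have "(Q - 1\<^sub>m (n + k)) *\<^sub>v u \<in> mat_image (Q - 1\<^sub>m (n + k))"
      using u unfolding mat_image_def by auto
    moreover have "p \<in> mat_kernel (qinv (transpose_mat Q) - 1\<^sub>m (n + k))"
      using fixed_vector_in_kernel_of_inverse_minus_one[OF _ Qi Qt_inv p fixed] Q by simp
    ultimately show "v \<in> ?S" unfolding v by blast
  qed
qed

theorem mainTheorem5:
  fixes g k :: nat and A Y Z :: "int mat"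
  assumes kg: "k \<le> g"
    and A_carr: "A \<in> carrier_mat g g"
    and A_inv: "invertible_mat A"
    and Y_carr: "Y \<in> carrier_mat (g - k) k"
    and Z_carr: "Z \<in> carrier_mat k k"
    and At: "transpose_mat A = four_block_mat (1\<^sub>m (g - k)) Y (0\<^sub>m k (g - k)) Z"
    and Z_inj: "\<forall>v \<in> carrier_vec k. (ratm Z - 1\<^sub>m k) *\<^sub>v v = 0\<^sub>v k \<longrightarrow> v = 0\<^sub>v k"
  shows "\<exists>B :: int mat. B \<in> carrier_mat g g \<and>
     {x + y | x y. x \<in> mat_image (ratm A - 1\<^sub>m g) \<and>
                   y \<in> (\<lambda>v. ratm B *\<^sub>v v) ` mat_kernel (qinv (transpose_mat (ratm A)) - 1\<^sub>m g)}
       = carrier_vec g \<and>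
     transpose_mat (ratm B) * qinv (transpose_mat (ratm A)) = qinv (ratm A) * ratm B"
proof (intro exI[of _ A] conjI)
  define n where "n = g - k"
  have g: "g = n + k" using kg by (simp add: n_def)
  define Q where "Q = ratm A"
  have Q: "Q \<in> carrier_mat g g" using A_carr by (simp add: Q_def)
  obtain N where N: "N \<in> carrier_mat g g" and QN: "Q * N = 1\<^sub>m g"
    using ratm_right_inverse[OF A_carr A_inv] unfolding Q_def by blast
  have "transpose_mat Q * transpose_mat N = 1\<^sub>m g"
    using transpose_mult[OF N Q] mat_mult_left_right_inverse[OF Q N QN] by simp
  note Qt_inv = qinv_inverse[OF transpose_carrier_mat[THEN iffD2, OF Q]
      transpose_carrier_mat[THEN iffD2, OF N] this]
  note Q_inv = qinv_inverse[OF Q N QN]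
  have Qt: "transpose_mat Q = four_block_mat (1\<^sub>m n) (ratm Y) (0\<^sub>m k n) (ratm Z)"
    unfolding Q_def n_def ratm_transpose[symmetric] At
    by (simp add: ratm_four_block_mat[OF one_carrier_mat Y_carr zero_carrier_mat Z_carr])
  have Y: "ratm Y \<in> carrier_mat n k" and Z: "ratm Z \<in> carrier_mat k k"
    using Y_carr Z_carr by (simp_all add: n_def)
  show "A \<in> carrier_mat g g" by (fact A_carr)
  show "{x + y | x y. x \<in> mat_image (ratm A - 1\<^sub>m g) \<and>
          y \<in> (\<lambda>v. ratm A *\<^sub>v v) ` mat_kernel (qinv (transpose_mat (ratm A)) - 1\<^sub>m g)}
        = carrier_vec g"
    using image_plus_fixed_space_of_transpose[OF Q[unfolded g] Qt_inv(3)[unfolded g] Y Z Qt Z_inj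
        Qt_inv(1)[unfolded g]]
    unfolding g[symmetric] Q_def .
  show "transpose_mat (ratm A) * qinv (transpose_mat (ratm A)) = qinv (ratm A) * ratm A"
    using Qt_inv(2) Q_inv(3) unfolding Q_def by simp
qed

end
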